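(* For every $n\in\mathbb N$, the set $\{\mathrm{First}(n),\ \mathrm{Next}(\mathrm{First}(n)),\ \mathrm{Next}(\mathrm{Next}(\mathrm{First}(n))),\ldots\}$ of naturally labeled topologies obtained by iteratively applying $\mathrm{Next}$ to $\mathrm{First}(n)$ (until $\mathrm{Next}$ is undefined) is exactly the set of all naturally labeled topologies of size $n$.
   Context: Let $X_n=\{0,1,\ldots,n-1\}$. A naturally labeled (NL) poset on $X_n$ is a partial order $\preceq$ on $X_n$ with $x\preceq y\Rightarrow x\le y$. A topology of size $n$ is a set $T$ of subsets of $X_n$ containing $\emptyset$ and $X_n$ and closed under union and intersection; it is a naturally labeled topology (NLT) if it equals the set of order ideals (downward closed subsets) of some NL poset on $X_n$. Subsets of $X_n$ are identified with the increasing words of their elements, and the length-lexicographic order compares words first by length, then lexicographically. Definitions: for an NLT $T$ of size $n$ and $S\in T$, $\mathrm{Grow}_S(T)=T\cup\{U\cup\{n\}: U\in T,\ S\subseteq U\}$ (an NLT of size $n+1$). $\mathrm{First}(n)=\mathrm{Grow}_\emptyset^n(\{\emptyset\})$ ($n$-fold application starting from the size-$0$ topology $\{\emptyset\}$). For $T$ of size $n\ge1$, $\mathrm{Cut}(T)=\{U\in T: n-1\notin U\}$ (size $n-1$). For $S\in T$, $\mathrm{Next}_S(T)$ is the element of $T$ immediately following $S$ in the length-lexicographic order, undefined if $S$ is the last element of $T$. $\mathrm{Next}(\{\emptyset\})$ is undefined; for an NLT $T$ of size $n\ge1$, $\mathrm{Next}(T)$ is defined recursively: let $S$ be the smallest (for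 inclusion) set of $T$ containing $n-1$, $S'=S\setminus\{n-1\}$, $T'=\mathrm{Cut}(T)$; if $\mathrm{Next}_{S'}(T')$ is defined, $\mathrm{Next}(T)=\mathrm{Grow}_{S''}(T')$ with $S''=\mathrm{Next}_{S'}(T')$; otherwise, if $\mathrm{Next}(T')$ is defined, $\mathrm{Next}(T)=\mathrm{Grow}_\emptyset(\mathrm{Next}(T'))$; otherwise $\mathrm{Next}(T)$ is undefined. *)

theory Defs
  imports Main
begin

text \<open>Topologies of size n are sets of subsets of X_n = {0..<n}; the size n is passed explicitly.\<close>

definition NL_poset :: "nat \<Rightarrow> (nat \<times> nat) set \<Rightarrow> bool" where
  "NL_poset n R \<longleftrightarrow> R \<subseteq> {0..<n} \<times> {0..<n} \<and> partial_order_on {0..<n} R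
     \<and> (\<forall>x y. (x, y) \<in> R \<longrightarrow> x \<le> y)"

definition order_ideals :: "nat \<Rightarrow> (nat \<times> nat) set \<Rightarrow> nat set set" where
  "order_ideals n R = {U. U \<subseteq> {0..<n} \<and> (\<forall>y\<in>U. \<forall>x. (x, y) \<in> R \<longrightarrow> x \<in> U)}"

definition NLT :: "nat \<Rightarrow> nat set set \<Rightarrow> bool" where
  "NLT n T \<longleftrightarrow> (\<exists>R. NL_poset n R \<and> T = order_ideals n R)"

definition llex_less :: "nat set \<Rightarrow> nat set \<Rightarrow> bool" where
  "llex_less A B \<longleftrightarrow> card A < card B \<or>
     (card A = card B \<and> (sorted_list_of_set A, sorted_list_of_set B) \<in> lexord {(x, y). x < y})"

definition Grow :: "nat \<Rightarrow> nat set \<Rightarrow> nat set set \<Rightarrow> nat set set" where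
  "Grow n S T = T \<union> {U \<union> {n} | U. U \<in> T \<and> S \<subseteq> U}"

primrec First :: "nat \<Rightarrow> nat set set" where
  "First 0 = {{}}"
| "First (Suc n) = Grow n {} (First n)"

definition Cut :: "nat \<Rightarrow> nat set set \<Rightarrow> nat set set" where
  "Cut n T = {U \<in> T. n \<notin> U}"

definition NextS :: "nat set \<Rightarrow> nat set set \<Rightarrow> nat set option" where
  "NextS S T = (if \<exists>U\<in>T. llex_less S U
     then Some (THE U. U \<in> T \<and> llex_less S U \<and> (\<forall>V\<in>T. llex_less S V \<longrightarrow> U = V \<or> llex_less U V))
     else None)"

definition smallest_containing :: "nat \<Rightarrow> nat set set \<Rightarrow> nat set" where
  "smallest_containing x T = (THE S. S \<in> T \<and> x \<in> S \<and> (\<forall>U\<in>T. x \<in> U \<longrightarrow> S \<subseteq> U))"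

primrec Next :: "nat \<Rightarrow> nat set set \<Rightarrow> nat set set option" where
  "Next 0 T = None"
| "Next (Suc n) T =
     (let S = smallest_containing n T; S' = S - {n}; T' = Cut n T in
      case NextS S' T' of
        Some S'' \<Rightarrow> Some (Grow n S'' T')
      | None \<Rightarrow> map_option (Grow n {}) (Next n T'))"

primrec iterNext :: "nat \<Rightarrow> nat \<Rightarrow> nat set set option" where
  "iterNext n 0 = Some (First n)"
| "iterNext n (Suc k) = Option.bind (iterNext n k) (Next n)"

end

(*
  Every NLT of size n+1 is Grow_S(T) for an NLT T of size n and some S in T (S is the
  down-set of n), and Cut recovers T. On such a topology Next walks S through the
  elements of T in length-lexicographic order; after the last one it continues with
  Grow_{} (Next T). Hence, starting from First (n+1) = Grow_{} (First n), the iteration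
  visits Grow_S(T) for every T reached at size n and every S in T, which by induction on
  n is every NLT of size n+1. Conversely Next maps NLTs to NLTs, since it only ever
  produces topologies of the form Grow_S(T) with S in T.
*)
theory Submission
  imports Defs "HOL-Library.List_Lexorder" "HOL-Library.Product_Lexorder"
begin

definition llex_key :: "nat set \<Rightarrow> nat \<times> nat list" where
  "llex_key A = (card A, sorted_list_of_set A)"

lemma llex_less_iff_key: "llex_less A B \<longleftrightarrow> llex_key A < llex_key B"
  by (auto simp: llex_less_def llex_key_def less_prod_def list_less_def)

lemma llex_key_inject: "finite A \<Longrightarrow> finite B \<Longrightarrow> llex_key A = llex_key B \<Longrightarrow> A = B"
  by (simp add: llex_key_def sorted_list_of_set_inject)

lemma llex_less_irrefl: "\<not> llex_less A A"
  by (simp add: llex_less_iff_key)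

lemma llex_less_trans: "llex_less A B \<Longrightarrow> llex_less B C \<Longrightarrow> llex_less A C"
  by (simp add: llex_less_iff_key)

lemma llex_less_linear: "finite A \<Longrightarrow> finite B \<Longrightarrow> llex_less A B \<or> A = B \<or> llex_less B A"
  using llex_key_inject by (metis llex_less_iff_key neqE)

lemma not_llex_less_empty: "\<not> llex_less A {}"
  by (simp add: llex_less_def)

lemma llex_minimal_exists:
  assumes "finite F" "F \<noteq> {}"
  obtains M where "M \<in> F" "\<forall>V\<in>F. \<not> llex_less V M"
  using ex_is_arg_min_if_finite[OF assms, of llex_key] that
  by (auto simp: is_arg_min_def llex_less_iff_key)

lemma llex_maximal_exists:
  assumes "finite F" "F \<noteq> {}"
  obtains M where "M \<in> F" "\<forall>V\<in>F. \<not> llex_less M V"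
proof -
  obtain M where "M \<in> F" "\<forall>V\<in>F. llex_key M \<le> llex_key V \<longrightarrow> llex_key M = llex_key V"
    using finite_has_maximal[of "llex_key ` F"] assms by auto
  then show ?thesis using that by (auto simp: llex_less_iff_key order.strict_iff_order)
qed

lemma NextS_eq_None_iff: "NextS S T = None \<longleftrightarrow> (\<forall>U\<in>T. \<not> llex_less S U)"
  by (simp add: NextS_def)

lemma NextS_eq_Some_iff:
  assumes "finite T" and "\<forall>U\<in>T. finite U"
  shows "NextS S T = Some U \<longleftrightarrow>
    U \<in> T \<and> llex_less S U \<and> (\<forall>V\<in>T. llex_less S V \<longrightarrow> \<not> llex_less V U)"
proof -
  let ?is_next = "\<lambda>U. U \<in> T \<and> llex_less S U \<and> (\<forall>V\<in>T. llex_less S V \<longrightarrow> U = V \<or> llex_less U V)"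
  have is_next_iff: "?is_next U \<longleftrightarrow>
      U \<in> T \<and> llex_less S U \<and> (\<forall>V\<in>T. llex_less S V \<longrightarrow> \<not> llex_less V U)" for U
    using assms(2) llex_less_linear llex_less_irrefl llex_less_trans by metis
  have is_next_unique: "?is_next U \<Longrightarrow> ?is_next U' \<Longrightarrow> U = U'" for U U'
    using llex_less_irrefl llex_less_trans by metis
  show ?thesis
  proof (cases "\<exists>V\<in>T. llex_less S V")
    case True
    then obtain U0 where "U0 \<in> {V \<in> T. llex_less S V}"
        and "\<forall>V\<in>{V \<in> T. llex_less S V}. \<not> llex_less V U0"
      using llex_minimal_exists[of "{V \<in> T. llex_less S V}"] assms(1) by auto
    then have "?is_next U0" using is_next_iff[of U0] by blast
    then have "NextS S T = Some U0"
      using True is_next_unique unfolding NextS_def by (simp add: the_equality)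
    then show ?thesis using \<open>?is_next U0\<close> is_next_iff is_next_unique by auto
  next
    case False
    then have "NextS S T = None" by (simp add: NextS_eq_None_iff)
    then show ?thesis using False by auto
  qed
qed

lemma NextS_induct:
  assumes "finite T" and "\<forall>U\<in>T. finite U"
    and "M \<in> T" and "\<forall>U\<in>T. \<not> llex_less U M" and "P M"
    and step: "\<And>S S'. S \<in> T \<Longrightarrow> P S \<Longrightarrow> NextS S T = Some S' \<Longrightarrow> P S'"
    and "S \<in> T"
  shows "P S"
proof (rule ccontr)
  \<comment> \<open>A llex-least counterexample is the NextS of the llex-greatest element below it.\<close>
  assume "\<not> P S"
  then obtain S1 where S1: "S1 \<in> T" "\<not> P S1" and S1_min: "\<forall>V\<in>{U\<in>T. \<not> P U}. \<not> llex_less V S1"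
    using llex_minimal_exists[of "{U\<in>T. \<not> P U}"] assms(1,7) by auto
  have "llex_less M S1"
    using llex_less_linear[of M S1] assms(2-5) S1 by metis
  then obtain S0 where S0: "S0 \<in> T" "llex_less S0 S1"
      and S0_max: "\<forall>V\<in>{U\<in>T. llex_less U S1}. \<not> llex_less S0 V"
    using llex_maximal_exists[of "{U\<in>T. llex_less U S1}"] assms(1,3) by auto
  have "P S0" using S0 S1_min by auto
  moreover have "NextS S0 T = Some S1"
    using S0 S0_max S1(1) by (auto simp: NextS_eq_Some_iff[OF assms(1,2)])
  ultimately show False using step S0(1) S1(2) by blast
qed

lemma NL_poset_extend:
  assumes "NL_poset n R" and "S \<in> order_ideals n R"
  shows "NL_poset (Suc n) (R \<union> insert (n, n) (S \<times> {n}))"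
proof -
  have R_sub: "R \<subseteq> {0..<n} \<times> {0..<n}" and "refl_on {0..<n} R" "trans R" "antisym R"
    and R_nl: "\<forall>x y. (x, y) \<in> R \<longrightarrow> x \<le> y"
    using assms(1) unfolding NL_poset_def partial_order_on_def preorder_on_def by auto
  have S_sub: "S \<subseteq> {0..<n}" and S_down: "\<And>x y. y \<in> S \<Longrightarrow> (x, y) \<in> R \<Longrightarrow> x \<in> S"
    using assms(2) unfolding order_ideals_def by auto
  let ?R = "R \<union> insert (n, n) (S \<times> {n})"
  have "refl_on {0..<Suc n} ?R"
    using \<open>refl_on {0..<n} R\<close> R_sub S_sub by (auto simp: refl_on_def less_Suc_eq)
  moreover have "trans ?R"
  proof (rule transI)
    fix x y z assume "(x, y) \<in> ?R" "(y, z) \<in> ?R"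
    then show "(x, z) \<in> ?R"
      using \<open>trans R\<close> R_sub S_down by (auto dest: transD)
  qed
  moreover have "antisym ?R"
    using \<open>antisym R\<close> R_sub S_sub by (auto simp: antisym_def)
  moreover have "?R \<subseteq> {0..<Suc n} \<times> {0..<Suc n}" and "\<forall>x y. (x, y) \<in> ?R \<longrightarrow> x \<le> y"
    using R_sub S_sub R_nl by auto
  ultimately show ?thesis
    unfolding NL_poset_def partial_order_on_def preorder_on_def by blast
qed

lemma mem_Grow_iff:
  assumes "\<forall>U\<in>T. n \<notin> U"
  shows "W \<in> Grow n S T \<longleftrightarrow> W - {n} \<in> T \<and> (n \<in> W \<longrightarrow> S \<subseteq> W - {n})"
proof (cases "n \<in> W")
  case True
  have "(\<exists>U. W = U \<union> {n} \<and> U \<in> T \<and> S \<subseteq> U) \<longleftrightarrow> W - {n} \<in> T \<and> S \<subseteq> W - {n}"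
  proof
    assume "\<exists>U. W = U \<union> {n} \<and> U \<in> T \<and> S \<subseteq> U"
    then obtain U where U: "W = U \<union> {n}" "U \<in> T" "S \<subseteq> U" by blast
    then have "U = W - {n}" using assms by auto
    then show "W - {n} \<in> T \<and> S \<subseteq> W - {n}" using U by simp
  next
    assume "W - {n} \<in> T \<and> S \<subseteq> W - {n}"
    then show "\<exists>U. W = U \<union> {n} \<and> U \<in> T \<and> S \<subseteq> U"
      using True by (intro exI[of _ "W - {n}"]) auto
  qed
  moreover have "W \<notin> T" using True assms by blast
  ultimately show ?thesis using True unfolding Grow_def by auto
next
  case False
  then show ?thesis using assms unfolding Grow_def by auto
qed

lemma mem_order_ideals_extend_iff:
  assumes "R \<subseteq> {0..<n} \<times> {0..<n}" and "n \<notin> S"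
  shows "W \<in> order_ideals (Suc n) (R \<union> insert (n, n) (S \<times> {n})) \<longleftrightarrow>
    W - {n} \<in> order_ideals n R \<and> (n \<in> W \<longrightarrow> S \<subseteq> W - {n})"
proof -
  define closed where "closed y \<longleftrightarrow> (\<forall>x. (x, y) \<in> R \<union> insert (n, n) (S \<times> {n}) \<longrightarrow> x \<in> W)" for y
  define closed' where "closed' y \<longleftrightarrow> (\<forall>x. (x, y) \<in> R \<longrightarrow> x \<in> W - {n})" for y
  have below: "x < n \<and> y < n" if "(x, y) \<in> R" for x y
    using assms(1) that by auto
  have "closed y \<longleftrightarrow> closed' y" if "y \<in> W - {n}" for y
    using that below unfolding closed_def closed'_def by auto
  moreover have "closed n \<longleftrightarrow> S \<subseteq> W - {n}" if "n \<in> W"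
    using that below assms(2) unfolding closed_def by auto
  ultimately have "(\<forall>y\<in>W. closed y) \<longleftrightarrow> (\<forall>y\<in>W - {n}. closed' y) \<and> (n \<in> W \<longrightarrow> S \<subseteq> W - {n})"
    by blast
  moreover have "W \<subseteq> {0..<Suc n} \<longleftrightarrow> W - {n} \<subseteq> {0..<n}"
    by (auto simp: less_Suc_eq)
  ultimately show ?thesis
    unfolding order_ideals_def closed_def closed'_def by simp
qed

lemma order_ideals_extend:
  assumes "R \<subseteq> {0..<n} \<times> {0..<n}" and "S \<subseteq> {0..<n}"
  shows "order_ideals (Suc n) (R \<union> insert (n, n) (S \<times> {n})) = Grow n S (order_ideals n R)"
proof -
  have "n \<notin> S" and "\<forall>U\<in>order_ideals n R. n \<notin> U"
    using assms(2) by (auto simp: order_ideals_def)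
  then show ?thesis
    by (intro set_eqI) (simp only: mem_order_ideals_extend_iff[OF assms(1) \<open>n \<notin> S\<close>] mem_Grow_iff)
qed

lemma NL_poset_Suc_split:
  assumes "NL_poset (Suc n) R"
  defines "R0 \<equiv> R \<inter> {0..<n} \<times> {0..<n}" and "S \<equiv> {x. x < n \<and> (x, n) \<in> R}"
  shows "NL_poset n R0" and "S \<in> order_ideals n R0" and "R = R0 \<union> insert (n, n) (S \<times> {n})"
proof -
  have R_sub: "R \<subseteq> {0..<Suc n} \<times> {0..<Suc n}" and "refl_on {0..<Suc n} R" "trans R" "antisym R"
    and R_nl: "\<forall>x y. (x, y) \<in> R \<longrightarrow> x \<le> y"
    using assms(1) unfolding NL_poset_def partial_order_on_def preorder_on_def by auto
  have "refl_on {0..<n} R0"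
    using \<open>refl_on {0..<Suc n} R\<close> unfolding R0_def refl_on_def by auto
  moreover have "trans R0"
    using \<open>trans R\<close> unfolding R0_def trans_def by blast
  moreover have "antisym R0"
    using \<open>antisym R\<close> unfolding R0_def antisym_def by blast
  ultimately show "NL_poset n R0"
    using R_nl unfolding NL_poset_def partial_order_on_def preorder_on_def R0_def by blast
  show "S \<in> order_ideals n R0"
    using \<open>trans R\<close> unfolding order_ideals_def S_def R0_def by (auto dest: transD)
  show "R = R0 \<union> insert (n, n) (S \<times> {n})"
  proof
    show "R \<subseteq> R0 \<union> insert (n, n) (S \<times> {n})"
    proof (rule subrelI)
      fix x y assume "(x, y) \<in> R"
      then show "(x, y) \<in> R0 \<union> insert (n, n) (S \<times> {n})"
        using R_sub R_nl unfolding R0_def S_def by (cases "y = n") fastforce+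
    qed
    show "R0 \<union> insert (n, n) (S \<times> {n}) \<subseteq> R"
      using \<open>refl_on {0..<Suc n} R\<close> unfolding R0_def S_def refl_on_def by auto
  qed
qed

lemma NLT_subset_Pow: "NLT n T \<Longrightarrow> T \<subseteq> Pow {0..<n}"
  unfolding NLT_def order_ideals_def by auto

lemma NLT_finite: "NLT n T \<Longrightarrow> finite T"
  using NLT_subset_Pow finite_subset by (metis finite_Pow_iff finite_atLeastLessThan)

lemma NLT_finite_mem: "NLT n T \<Longrightarrow> U \<in> T \<Longrightarrow> finite U"
  by (rule finite_subset[of U "{0..<n}"]) (use NLT_subset_Pow in auto)

lemma NLT_not_mem_size: "NLT n T \<Longrightarrow> \<forall>U\<in>T. n \<notin> U"
  using NLT_subset_Pow by fastforce

lemma NLT_empty_mem: "NLT n T \<Longrightarrow> {} \<in> T"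
  unfolding NLT_def order_ideals_def by auto

lemma NLT_0_iff: "NLT 0 T \<longleftrightarrow> T = {{}}"
proof
  assume "NLT 0 T"
  then show "T = {{}}" using NLT_subset_Pow[of 0 T] NLT_empty_mem[of 0 T] by auto
next
  have "NL_poset 0 {}"
    unfolding NL_poset_def partial_order_on_def preorder_on_def refl_on_def by simp
  moreover have "order_ideals 0 {} = {{}}"
    unfolding order_ideals_def by auto
  ultimately show "T = {{}} \<Longrightarrow> NLT 0 T"
    unfolding NLT_def by auto
qed

lemma NLT_Suc_iff: "NLT (Suc n) T \<longleftrightarrow> (\<exists>T' S. NLT n T' \<and> S \<in> T' \<and> T = Grow n S T')"
proof
  assume "NLT (Suc n) T"
  then obtain R where R: "NL_poset (Suc n) R" "T = order_ideals (Suc n) R"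
    unfolding NLT_def by blast
  define R0 where "R0 = R \<inter> {0..<n} \<times> {0..<n}"
  define S where "S = {x. x < n \<and> (x, n) \<in> R}"
  have "NL_poset n R0" "S \<in> order_ideals n R0" "R = R0 \<union> insert (n, n) (S \<times> {n})"
    using NL_poset_Suc_split[OF R(1)] unfolding R0_def S_def by auto
  moreover have "R0 \<subseteq> {0..<n} \<times> {0..<n}" and "S \<subseteq> {0..<n}"
    using calculation(1,2) unfolding NL_poset_def order_ideals_def by auto
  ultimately have "T = Grow n S (order_ideals n R0)"
    using R(2) order_ideals_extend by simp
  then show "\<exists>T' S. NLT n T' \<and> S \<in> T' \<and> T = Grow n S T'"
    using \<open>NL_poset n R0\<close> \<open>S \<in> order_ideals n R0\<close> unfolding NLT_def by blast
next
  assume "\<exists>T' S. NLT n T' \<and> S \<in> T' \<and> T = Grow n S T'"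
  then obtain R S where R: "NL_poset n R" "S \<in> order_ideals n R" "T = Grow n S (order_ideals n R)"
    unfolding NLT_def by blast
  moreover have "R \<subseteq> {0..<n} \<times> {0..<n}" and "S \<subseteq> {0..<n}"
    using R(1,2) unfolding NL_poset_def order_ideals_def by auto
  ultimately have "T = order_ideals (Suc n) (R \<union> insert (n, n) (S \<times> {n}))"
    using order_ideals_extend by simp
  then show "NLT (Suc n) T"
    using NL_poset_extend[OF R(1,2)] unfolding NLT_def by blast
qed

lemma First_NLT: "NLT n (First n)"
proof (induction n)
  case 0
  then show ?case by (simp add: NLT_0_iff)
next
  case (Suc n)
  then show ?case
    unfolding NLT_Suc_iff First.simps using NLT_empty_mem by blast
qed

lemma Cut_Grow: "\<forall>U\<in>T. n \<notin> U \<Longrightarrow> Cut n (Grow n S T) = T"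
  unfolding Cut_def Grow_def by auto

lemma smallest_containing_Grow:
  assumes "\<forall>U\<in>T. n \<notin> U" and "S \<in> T"
  shows "smallest_containing n (Grow n S T) = insert n S"
  unfolding smallest_containing_def
proof (rule the_equality)
  have "n \<notin> S" using assms by blast
  then show "insert n S \<in> Grow n S T \<and> n \<in> insert n S \<and>
      (\<forall>U\<in>Grow n S T. n \<in> U \<longrightarrow> insert n S \<subseteq> U)"
    using assms by (auto simp: mem_Grow_iff)
  then show "S' = insert n S"
    if "S' \<in> Grow n S T \<and> n \<in> S' \<and> (\<forall>U\<in>Grow n S T. n \<in> U \<longrightarrow> S' \<subseteq> U)" for S'
    using that by blast
qed

lemma Next_Suc_Grow:
  assumes "\<forall>U\<in>T. n \<notin> U" and "S \<in> T"
  shows "Next (Suc n) (Grow n S T) =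
    (case NextS S T of
      Some S' \<Rightarrow> Some (Grow n S' T)
    | None \<Rightarrow> map_option (Grow n {}) (Next n T))"
proof -
  have "insert n S - {n} = S" using assms by blast
  then show ?thesis
    using Cut_Grow[OF assms(1)] smallest_containing_Grow[OF assms] by (simp add: Let_def)
qed

lemma NLT_Next: "NLT n T \<Longrightarrow> Next n T = Some T' \<Longrightarrow> NLT n T'"
proof (induction n arbitrary: T T')
  case 0
  then show ?case by simp
next
  case (Suc n)
  obtain T0 S where T0: "NLT n T0" "S \<in> T0" and T: "T = Grow n S T0"
    using Suc.prems(1) NLT_Suc_iff by blast
  note Next_T = Suc.prems(2)[unfolded T Next_Suc_Grow[OF NLT_not_mem_size[OF T0(1)] T0(2)]]
  show ?case
  proof (cases "NextS S T0")
    case (Some S')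
    then have "S' \<in> T0"
      using NextS_eq_Some_iff NLT_finite[OF T0(1)] NLT_finite_mem[OF T0(1)] by blast
    moreover have "T' = Grow n S' T0" using Next_T Some by simp
    ultimately show ?thesis using T0(1) NLT_Suc_iff by blast
  next
    case None
    then obtain T0' where "Next n T0 = Some T0'" and "T' = Grow n {} T0'"
      using Next_T by auto
    then show ?thesis using Suc.IH[OF T0(1)] NLT_empty_mem NLT_Suc_iff by blast
  qed
qed

inductive reachable :: "nat \<Rightarrow> nat set set \<Rightarrow> bool" for n where
  reachable_First: "reachable n (First n)"
| reachable_Next: "reachable n T \<Longrightarrow> Next n T = Some T' \<Longrightarrow> reachable n T'"

lemma reachable_iff_iterNext: "reachable n T \<longleftrightarrow> (\<exists>k. iterNext n k = Some T)"
proof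
  assume "reachable n T"
  then show "\<exists>k. iterNext n k = Some T"
  proof (induction rule: reachable.induct)
    case reachable_First
    have "iterNext n 0 = Some (First n)" by simp
    then show ?case by blast
  next
    case (reachable_Next T T')
    then obtain k where "iterNext n k = Some T" by blast
    then have "iterNext n (Suc k) = Some T'" using reachable_Next.hyps(2) by simp
    then show ?case by blast
  qed
next
  assume "\<exists>k. iterNext n k = Some T"
  then obtain k where "iterNext n k = Some T" by blast
  then show "reachable n T"
    by (induction k arbitrary: T) (auto intro: reachable.intros split: Option.bind_splits)
qed

lemma reachable_NLT: "reachable n T \<Longrightarrow> NLT n T"
  by (induction rule: reachable.induct) (auto intro: First_NLT NLT_Next)

lemma reachable_Grow_mem:
  assumes "NLT n T" and "reachable (Suc n) (Grow n {} T)" and "S \<in> T"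
  shows "reachable (Suc n) (Grow n S T)"
proof (rule NextS_induct[where M = "{}" and P = "\<lambda>S. reachable (Suc n) (Grow n S T)"])
  fix S S' assume "S \<in> T" "reachable (Suc n) (Grow n S T)" "NextS S T = Some S'"
  moreover have "Next (Suc n) (Grow n S T) = Some (Grow n S' T)"
    using Next_Suc_Grow[OF NLT_not_mem_size[OF assms(1)] \<open>S \<in> T\<close>] \<open>NextS S T = Some S'\<close> by simp
  ultimately show "reachable (Suc n) (Grow n S' T)" using reachable_Next by blast
qed (use assms NLT_finite NLT_finite_mem NLT_empty_mem not_llex_less_empty in auto)

lemma reachable_Grow_empty_Next:
  assumes "NLT n T" and "reachable (Suc n) (Grow n {} T)" and "Next n T = Some T'"
  shows "reachable (Suc n) (Grow n {} T')"
proof -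
  obtain L where "L \<in> T" and "\<forall>V\<in>T. \<not> llex_less L V"
    using llex_maximal_exists NLT_finite[OF assms(1)] NLT_empty_mem[OF assms(1)] by blast
  then have "NextS L T = None" by (simp add: NextS_eq_None_iff)
  then have "Next (Suc n) (Grow n L T) = Some (Grow n {} T')"
    using Next_Suc_Grow[OF NLT_not_mem_size[OF assms(1)] \<open>L \<in> T\<close>] assms(3) by simp
  then show ?thesis
    using reachable_Grow_mem[OF assms(1,2) \<open>L \<in> T\<close>] reachable_Next by blast
qed

lemma reachable_Suc_Grow_empty: "reachable n T \<Longrightarrow> reachable (Suc n) (Grow n {} T)"
proof (induction rule: reachable.induct)
  case reachable_First
  then show ?case using reachable.reachable_First[of "Suc n"] by simp
next
  case (reachable_Next T T')
  then show ?case using reachable_Grow_empty_Next reachable_NLT by blast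
qed

lemma NLT_reachable: "NLT n T \<Longrightarrow> reachable n T"
proof (induction n arbitrary: T)
  case 0
  then show ?case using reachable_First[of 0] by (simp add: NLT_0_iff)
next
  case (Suc n)
  then obtain T0 S where "NLT n T0" "S \<in> T0" "T = Grow n S T0"
    using NLT_Suc_iff by blast
  then show ?case
    using Suc.IH reachable_Suc_Grow_empty reachable_Grow_mem by blast
qed

theorem theorem5p11:
  fixes n :: nat
  shows "{T. \<exists>k. iterNext n k = Some T} = {T. NLT n T}"
  using reachable_NLT NLT_reachable by (auto simp: reachable_iff_iterNext[symmetric])

end
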